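(* Consider an $(n+2)$-dimensional ($n\ge1$) static spherically symmetric spacetime with line element $ds^2=-F(r)dt^2+G(r)dr^2+r^2d\ell^2_{S^n}$, solving Einstein's equations $G_{ab}+\Lambda g_{ab}=8\pi T_{ab}$ with energy-momentum tensor $T^b_a=\mathrm{diag}\{-\rho(r),p_r(r),p_\theta(r),\dots,p_\theta(r)\}$ satisfying the dominant energy condition $|p_r(r)|,|p_\theta(r)|\le\rho(r)<+\infty$. Suppose $0<F(r),G(r)<+\infty$ on an interval $(r_i^-,r_i^+)\subset(0,+\infty)$ with $F,F',G\in C^1((r_i^-,r_i^+))$. Then: (i) $F(r)G(r)$ is a nondecreasing function of $r$ on $(r_i^-,r_i^+)$, and hence bounded in a neighbourhood of $r_i^-$; (ii) in the outer region $(r_m^-,+\infty)$ of an asymptotically flat spacetime (i.e. $0<F,G<\infty$ on $(r_m^-,+\infty)$ and $\lim_{r\to+\infty}F(r)=\lim_{r\to+\infty}G(r)=1$), $F(r)G(r)$ is bounded.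
   Context: $d\ell^2_{S^n}$ is the round metric on the unit sphere $S^n$, $G_{ab}$ the Einstein tensor of the metric, $\Lambda$ the cosmological constant. *)

theory Defs
  imports "HOL-Analysis.Analysis"
begin

text \<open>Metric ds^2 = -F dt^2 + G dr^2 + r^2 dl^2_{S^n}.  F1, F2 are the first and
second derivatives of F, G1 the first derivative of G.  Below are the mixed
components G^t_t, G^r_r, G^theta_theta of the Einstein tensor of this metric
(all angular components coincide).\<close>

definition einstein_tt :: "nat \<Rightarrow> (real \<Rightarrow> real) \<Rightarrow> (real \<Rightarrow> real) \<Rightarrow> real \<Rightarrow> real" where
  "einstein_tt n G G1 r =
     - (real n * (real n - 1)) / (2 * r^2) * (1 - 1 / G r)
     - real n * G1 r / (2 * r * (G r)^2)"

definition einstein_rr :: "nat \<Rightarrow> (real \<Rightarrow> real) \<Rightarrow> (real \<Rightarrow> real) \<Rightarrow> (real \<Rightarrow> real) \<Rightarrow> real \<Rightarrow> real" where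
  "einstein_rr n F F1 G r =
     - (real n * (real n - 1)) / (2 * r^2) * (1 - 1 / G r)
     + real n * F1 r / (2 * r * F r * G r)"

definition einstein_angular ::
  "nat \<Rightarrow> (real \<Rightarrow> real) \<Rightarrow> (real \<Rightarrow> real) \<Rightarrow> (real \<Rightarrow> real) \<Rightarrow> (real \<Rightarrow> real) \<Rightarrow> (real \<Rightarrow> real) \<Rightarrow> real \<Rightarrow> real" where
  "einstein_angular n F F1 F2 G G1 r =
     - ((real n - 1) * (real n - 2)) / (2 * r^2) * (1 - 1 / G r)
     + (1 / G r) * ( F2 r / (2 * F r) - (F1 r)^2 / (4 * (F r)^2) - F1 r * G1 r / (4 * F r * G r)
                     + (real n - 1) * (F1 r / (2 * F r) - G1 r / (2 * G r)) / r)"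

definition static_sph_solution ::
  "nat \<Rightarrow> real \<Rightarrow> (real \<Rightarrow> real) \<Rightarrow> (real \<Rightarrow> real) \<Rightarrow> (real \<Rightarrow> real) \<Rightarrow> (real \<Rightarrow> real) \<Rightarrow> (real \<Rightarrow> real)
   \<Rightarrow> (real \<Rightarrow> real) \<Rightarrow> (real \<Rightarrow> real) \<Rightarrow> (real \<Rightarrow> real) \<Rightarrow> real set \<Rightarrow> bool" where
  "static_sph_solution n \<Lambda> F F1 F2 G G1 \<rho> pr p\<theta> S \<longleftrightarrow>
     (\<forall>r\<in>S. 0 < F r \<and> 0 < G r
        \<and> (F has_real_derivative F1 r) (at r)
        \<and> (F1 has_real_derivative F2 r) (at r)
        \<and> (G has_real_derivative G1 r) (at r)
        \<and> einstein_tt n G G1 r + \<Lambda> = 8 * pi * (- \<rho> r)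
        \<and> einstein_rr n F F1 G r + \<Lambda> = 8 * pi * pr r
        \<and> einstein_angular n F F1 F2 G G1 r + \<Lambda> = 8 * pi * p\<theta> r
        \<and> \<bar>pr r\<bar> \<le> \<rho> r \<and> \<bar>p\<theta> r\<bar> \<le> \<rho> r)
     \<and> continuous_on S F2 \<and> continuous_on S G1"

end

theory Submission
  imports Defs
begin

text \<open>Subtracting the tt- from the rr-component of Einstein's equations eliminates \<open>\<Lambda>\<close> and
the curvature term of the sphere, leaving \<open>n (F G)' / (2 r F G\<^sup>2) = 8\<pi> (\<rho> + p\<^sub>r)\<close>.
The right-hand side is nonnegative by the dominant energy condition, so \<open>F G\<close> is
nondecreasing. Near the inner end it is then bounded above by any interior value, and in an
asymptotically flat exterior by its limit \<open>1\<close> at infinity; positivity bounds it below.\<close>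

lemma einstein_rr_minus_tt:
  assumes "r \<noteq> 0" "F r \<noteq> 0" "G r \<noteq> 0"
  shows "einstein_rr n F F1 G r - einstein_tt n G G1 r
           = real n / (2 * r * F r * (G r)\<^sup>2) * (F1 r * G r + F r * G1 r)"
  using assms unfolding einstein_rr_def einstein_tt_def
  by (simp add: field_simps power2_eq_square)

lemma static_sph_solution_FG_pos:
  assumes "static_sph_solution n \<Lambda> F F1 F2 G G1 \<rho> pr p\<theta> S" "r \<in> S"
  shows "F r * G r > 0"
  using assms unfolding static_sph_solution_def by auto

lemma static_sph_solution_FG_deriv_nonneg:
  assumes "n \<ge> 1" and sol: "static_sph_solution n \<Lambda> F F1 F2 G G1 \<rho> pr p\<theta> S"
    and "r \<in> S" "r > 0"
  shows "((\<lambda>r. F r * G r) has_real_derivative F1 r * G r + F r * G1 r) (at r)"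
    and "F1 r * G r + F r * G1 r \<ge> 0"
proof -
  from sol \<open>r \<in> S\<close> have F: "F r > 0" and G: "G r > 0"
    and dF: "(F has_real_derivative F1 r) (at r)" and dG: "(G has_real_derivative G1 r) (at r)"
    and tt: "einstein_tt n G G1 r + \<Lambda> = 8 * pi * (- \<rho> r)"
    and rr: "einstein_rr n F F1 G r + \<Lambda> = 8 * pi * pr r"
    and dec: "\<bar>pr r\<bar> \<le> \<rho> r"
    unfolding static_sph_solution_def by auto
  show "((\<lambda>r. F r * G r) has_real_derivative F1 r * G r + F r * G1 r) (at r)"
    using DERIV_mult[OF dF dG] by (simp add: mult.commute)
  have "real n / (2 * r * F r * (G r)\<^sup>2) * (F1 r * G r + F r * G1 r) = 8 * pi * (pr r + \<rho> r)"
    using tt rr einstein_rr_minus_tt[of r F G n F1 G1] F G \<open>r > 0\<close> by (simp add: algebra_simps)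
  moreover have "8 * pi * (pr r + \<rho> r) \<ge> 0"
    using dec by simp
  moreover have "real n / (2 * r * F r * (G r)\<^sup>2) > 0"
    using \<open>n \<ge> 1\<close> F G \<open>r > 0\<close> by simp
  ultimately show "F1 r * G r + F r * G1 r \<ge> 0"
    by (metis zero_le_mult_iff not_less)
qed

lemma mono_on_if_deriv_nonneg:
  fixes f :: "real \<Rightarrow> real"
  assumes "is_interval S"
    and deriv: "\<And>x. x \<in> S \<Longrightarrow> (f has_real_derivative f' x) (at x)"
    and nonneg: "\<And>x. x \<in> S \<Longrightarrow> f' x \<ge> 0"
  shows "mono_on S f"
proof (rule mono_onI)
  fix x y assume "x \<in> S" "y \<in> S" "x \<le> y"
  then have sub: "{x..y} \<subseteq> S"
    by (auto intro: mem_is_interval_1_I[OF \<open>is_interval S\<close> \<open>x \<in> S\<close> \<open>y \<in> S\<close>])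
  show "f x \<le> f y"
    by (rule deriv_nonneg_imp_mono[OF deriv nonneg \<open>x \<le> y\<close>]) (use sub in auto)
qed

lemma static_sph_solution_mono_FG:
  assumes "n \<ge> 1" "static_sph_solution n \<Lambda> F F1 F2 G G1 \<rho> pr p\<theta> S"
    and "is_interval S" "\<And>r. r \<in> S \<Longrightarrow> r > 0"
  shows "mono_on S (\<lambda>r. F r * G r)"
proof (rule mono_on_if_deriv_nonneg[OF \<open>is_interval S\<close>])
  fix r assume "r \<in> S"
  then show "((\<lambda>r. F r * G r) has_real_derivative F1 r * G r + F r * G1 r) (at r)"
    and "F1 r * G r + F r * G1 r \<ge> 0"
    using static_sph_solution_FG_deriv_nonneg[OF assms(1,2)] assms(4) by blast+
qed

lemma mono_on_nonneg_bounded_at_left: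
  fixes f :: "real \<Rightarrow> real"
  assumes "mono_on {a<..<b} f" "a < b" "\<And>r. r \<in> {a<..<b} \<Longrightarrow> f r \<ge> 0"
  shows "\<exists>\<epsilon>>0. \<exists>M. \<forall>r\<in>{a<..<min b (a + \<epsilon>)}. \<bar>f r\<bar> \<le> M"
proof (intro exI conjI ballI)
  let ?m = "(a + b) / 2"
  show "(b - a) / 2 > 0"
    using \<open>a < b\<close> by simp
  fix r assume r: "r \<in> {a<..<min b (a + (b - a) / 2)}"
  then have "f r \<le> f ?m"
    using \<open>a < b\<close> by (intro mono_onD[OF assms(1)]) (auto simp: field_simps)
  then show "\<bar>f r\<bar> \<le> f ?m"
    using assms(3) r by auto
qed

lemma mono_on_le_limit_at_top:
  fixes f :: "real \<Rightarrow> real"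
  assumes "mono_on {c<..} f" "(f \<longlongrightarrow> L) at_top" "r \<in> {c<..}"
  shows "f r \<le> L"
proof (rule tendsto_lowerbound[OF assms(2)])
  show "\<forall>\<^sub>F s in at_top. f r \<le> f s"
    using eventually_ge_at_top[of r]
    by eventually_elim (use assms(3) in \<open>auto intro!: mono_onD[OF assms(1)]\<close>)
qed simp

theorem lemma5p1:
  fixes n :: nat and \<Lambda> :: real
    and F F1 F2 G G1 \<rho> pr p\<theta> :: "real \<Rightarrow> real"
  assumes "n \<ge> 1"
  shows "(\<forall>a b. 0 \<le> a \<and> a < b \<and> static_sph_solution n \<Lambda> F F1 F2 G G1 \<rho> pr p\<theta> {a<..<b} \<longrightarrow>
            mono_on {a<..<b} (\<lambda>r. F r * G r) \<and>
            (\<exists>\<epsilon>>0. \<exists>M. \<forall>r\<in>{a<..<min b (a + \<epsilon>)}. \<bar>F r * G r\<bar> \<le> M))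
       \<and> (\<forall>c. 0 \<le> c \<and> static_sph_solution n \<Lambda> F F1 F2 G G1 \<rho> pr p\<theta> {c<..}
              \<and> (F \<longlongrightarrow> 1) at_top \<and> (G \<longlongrightarrow> 1) at_top \<longrightarrow>
            (\<exists>M. \<forall>r\<in>{c<..}. \<bar>F r * G r\<bar> \<le> M))"
proof (intro conjI allI impI; elim conjE)
  fix a b assume "0 \<le> a" "a < b" and sol: "static_sph_solution n \<Lambda> F F1 F2 G G1 \<rho> pr p\<theta> {a<..<b}"
  show mono: "mono_on {a<..<b} (\<lambda>r. F r * G r)"
    using \<open>0 \<le> a\<close> by (intro static_sph_solution_mono_FG[OF assms sol]) auto
  show "\<exists>\<epsilon>>0. \<exists>M. \<forall>r\<in>{a<..<min b (a + \<epsilon>)}. \<bar>F r * G r\<bar> \<le> M"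
    using static_sph_solution_FG_pos[OF sol]
    by (intro mono_on_nonneg_bounded_at_left[OF mono \<open>a < b\<close>] less_imp_le)
next
  fix c assume "0 \<le> c" and sol: "static_sph_solution n \<Lambda> F F1 F2 G G1 \<rho> pr p\<theta> {c<..}"
    and "(F \<longlongrightarrow> 1) at_top" "(G \<longlongrightarrow> 1) at_top"
  then have lim: "((\<lambda>r. F r * G r) \<longlongrightarrow> 1) at_top"
    using tendsto_mult[of F 1 at_top G 1] by simp
  have mono: "mono_on {c<..} (\<lambda>r. F r * G r)"
    using \<open>0 \<le> c\<close> by (intro static_sph_solution_mono_FG[OF assms sol]) auto
  have "\<bar>F r * G r\<bar> \<le> 1" if "r \<in> {c<..}" for r
    using mono_on_le_limit_at_top[OF mono lim that] static_sph_solution_FG_pos[OF sol that] by simp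
  then show "\<exists>M. \<forall>r\<in>{c<..}. \<bar>F r * G r\<bar> \<le> M"
    by blast
qed

end
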